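(* Let $G=(X,\Sigma,\longrightarrow,X_0)$ (plant) and $R=(Z,\Sigma,\longrightarrow,Z_0)$ (specification) be automata. If $\mathit{SPR}(G,R)\neq\emptyset$, then $\mathcal{A}(E^{\uparrow}_{(G,R)})\in\mathit{MSPR}(G,R)$.
   Context: An automaton is a 4-tuple $A=(Q,\Sigma,\longrightarrow,Q_0)$ with state set $Q$, finite event set $\Sigma$, ${\longrightarrow}\subseteq Q\times\Sigma\times Q$ and $\emptyset\neq Q_0\subseteq Q$. Write $q\xrightarrow{\sigma}q'$ for $(q,\sigma,q')\in{\longrightarrow}$, $q\xrightarrow{\sigma}$ if some such $q'$ exists; extend to strings. A state is reachable if it is reached from an initial state by some string. Events are partitioned into uncontrollable $\Sigma_{uc}$ and controllable $\Sigma_c$; $\Sigma_r\subseteq\Sigma$ is a fixed set of required events. For a supervisor $S=(Y,\Sigma,\longrightarrow,Y_0)$, $S\|G=(Y\times X,\Sigma,\longrightarrow,Y_0\times X_0)$ with $(y,x)\xrightarrow{\sigma}(y',x')$ iff $y\xrightarrow{\sigma}y'$ and $x\xrightarrow{\sigma}x'$. $S$ is $\Sigma_{uc}$-admissible w.r.t. $G$ if for every reachable $(y,x)$ of $S\|G$ and $\sigma\in\Sigma_{uc}$, $x\xrightarrow{\sigma}$ implies $(y,x)\xrightarrow{\sigma}$. For automata $A_1=(Q_1,\Sigma,\longrightarrow,Q_{01})$, $A_2=(Q_2,\Sigma,\longrightarrow,Q_{02})$, $\Phi\subseteq Q_1\times Q_2$ is a simulation if (initial state) every $q_0\in Q_{01}$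 has $p_0\in Q_{02}$ with $(q_0,p_0)\in\Phi$, and (forward) for all $(q,p)\in\Phi$, $\sigma\in\Sigma$, $q\xrightarrow{\sigma}q'$ there is $p'$ with $p\xrightarrow{\sigma}p'$, $(q',p')\in\Phi$; it is a cc-simulation if moreover ($\Sigma_r$-backward) for all $(q,p)\in\Phi$, $\sigma\in\Sigma_r$, $p\xrightarrow{\sigma}p'$ there is $q'$ with $q\xrightarrow{\sigma}q'$, $(q',p')\in\Phi$. Write $A_1\sqsubseteq A_2$, $A_1\sqsubseteq_{cc}A_2$ if such relations exist. $\mathit{SPR}(G,R)$ is the set of $\Sigma_{uc}$-admissible supervisors $S$ with $S\|G\sqsubseteq_{cc}R$, and $\mathit{MSPR}(G,R)=\{S\in\mathit{SPR}(G,R):\forall S'\in\mathit{SPR}(G,R)\ (S'\|G\sqsubseteq S\|G)\}$. For $W,W'\subseteq X\times Z$, $\sigma\in\Sigma$: $\mathit{match}_{G,R}(W,\sigma,W')$ iff for all $(x,z)\in W$ and $x\xrightarrow{\sigma}x'$ there is $z'$ with $z\xrightarrow{\sigma}z'$ and $(x',z')\in W'$. Define $F_{(G,R)}:\wp(\wp(X\times Z))\to\wp(\wp(X\times Z))$ by: $W\in F_{(G,R)}(E)$ iff $W\in E$ and (1) for every $\sigma\in\Sigma_{uc}$ there is $W'\in E$ with $\mathit{match}_{G,R}(W,\sigma,W')$, and (2) for every $(x,z)\in W$, $\sigma\in\Sigma_r$, $z'$ with $z\xrightarrow{\sigma}z'$ there exist $x'\in X$, $W'\in E$ with $x\xrightarrow{\sigma}x'$,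 $(x',z')\in W'$ and $\mathit{match}_{G,R}(W,\sigma,W')$. $F_{(G,R)}$ is monotone and $E^{\uparrow}_{(G,R)}$ denotes its greatest fixpoint. For $E\subseteq\wp(X\times Z)$ let $E^*=\bigcup_{\widetilde W\in E}\wp(\widetilde W)$ and $\mathrm{Succ}_\sigma(W)=\bigcup_{(x,z)\in W}\{x':x\xrightarrow{\sigma}x'\}\times\{z':z\xrightarrow{\sigma}z'\}$. The automaton $\mathcal{A}(E)=(E^*,\Sigma,\longrightarrow,I_E)$ has $I_E=\{W_0\in E^*:\forall x_0\in X_0\,\exists z_0\in Z_0\,((x_0,z_0)\in W_0)\text{ and }W_0\subseteq X_0\times Z_0\}$ and $W\xrightarrow{\sigma}W'$ iff (i) there exist $(x,z)\in W$, $(x',z')\in W'$ with $x\xrightarrow{\sigma}x'$ and $z\xrightarrow{\sigma}z'$; (ii) $\mathit{match}_{G,R}(W,\sigma,W')$; (iii) $W'\subseteq\mathrm{Succ}_\sigma(W)$. *)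

theory Defs
  imports Main
begin

record ('q, 'e) aut =
  states :: "'q set"
  trans  :: "('q \<times> 'e \<times> 'q) set"
  init   :: "'q set"

definition is_aut :: "'e set \<Rightarrow> ('q, 'e) aut \<Rightarrow> bool" where
  "is_aut Evs A \<longleftrightarrow>
     trans A \<subseteq> states A \<times> Evs \<times> states A \<and>
     init A \<noteq> {} \<and> init A \<subseteq> states A"

inductive reachable :: "('q, 'e) aut \<Rightarrow> 'q \<Rightarrow> bool" for A where
  reach_init: "q \<in> init A \<Longrightarrow> reachable A q"
| reach_step: "reachable A q \<Longrightarrow> (q, \<sigma>, q') \<in> trans A \<Longrightarrow> reachable A q'"

definition enabled :: "('q, 'e) aut \<Rightarrow> 'q \<Rightarrow> 'e \<Rightarrow> bool" where
  "enabled A q \<sigma> \<longleftrightarrow> (\<exists>q'. (q, \<sigma>, q') \<in> trans A)"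

definition sync :: "('y, 'e) aut \<Rightarrow> ('x, 'e) aut \<Rightarrow> ('y \<times> 'x, 'e) aut" where
  "sync S G = \<lparr> states = states S \<times> states G,
      trans = {((y, x), \<sigma>, (y', x')) | y x \<sigma> y' x'.
                 (y, \<sigma>, y') \<in> trans S \<and> (x, \<sigma>, x') \<in> trans G},
      init = init S \<times> init G \<rparr>"

definition admissible :: "'e set \<Rightarrow> ('y, 'e) aut \<Rightarrow> ('x, 'e) aut \<Rightarrow> bool" where
  "admissible Sig_uc S G \<longleftrightarrow>
     (\<forall>y x. reachable (sync S G) (y, x) \<longrightarrow>
        (\<forall>\<sigma>\<in>Sig_uc. enabled G x \<sigma> \<longrightarrow> enabled (sync S G) (y, x) \<sigma>))"

definition is_sim :: "('a, 'e) aut \<Rightarrow> ('b, 'e) aut \<Rightarrow> ('a \<times> 'b) set \<Rightarrow> bool" where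
  "is_sim A1 A2 \<Phi> \<longleftrightarrow>
     \<Phi> \<subseteq> states A1 \<times> states A2 \<and>
     (\<forall>q0\<in>init A1. \<exists>p0\<in>init A2. (q0, p0) \<in> \<Phi>) \<and>
     (\<forall>q p \<sigma> q'. (q, p) \<in> \<Phi> \<longrightarrow> (q, \<sigma>, q') \<in> trans A1 \<longrightarrow>
        (\<exists>p'. (p, \<sigma>, p') \<in> trans A2 \<and> (q', p') \<in> \<Phi>))"

definition is_cc_sim :: "'e set \<Rightarrow> ('a, 'e) aut \<Rightarrow> ('b, 'e) aut \<Rightarrow> ('a \<times> 'b) set \<Rightarrow> bool" where
  "is_cc_sim Sig_r A1 A2 \<Phi> \<longleftrightarrow>
     is_sim A1 A2 \<Phi> \<and>
     (\<forall>q p \<sigma> p'. (q, p) \<in> \<Phi> \<longrightarrow> \<sigma> \<in> Sig_r \<longrightarrow> (p, \<sigma>, p') \<in> trans A2 \<longrightarrow>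
        (\<exists>q'. (q, \<sigma>, q') \<in> trans A1 \<and> (q', p') \<in> \<Phi>))"

definition simulated :: "('a, 'e) aut \<Rightarrow> ('b, 'e) aut \<Rightarrow> bool" where
  "simulated A1 A2 \<longleftrightarrow> (\<exists>\<Phi>. is_sim A1 A2 \<Phi>)"

definition cc_simulated :: "'e set \<Rightarrow> ('a, 'e) aut \<Rightarrow> ('b, 'e) aut \<Rightarrow> bool" where
  "cc_simulated Sig_r A1 A2 \<longleftrightarrow> (\<exists>\<Phi>. is_cc_sim Sig_r A1 A2 \<Phi>)"

text \<open>SPR(G,R): admissible supervisors whose closed loop is cc-simulated by R.
  The supervisor state type 'y is fixed by the type of the resulting set.\<close>
definition SPR :: "'e set \<Rightarrow> 'e set \<Rightarrow> 'e set \<Rightarrow> ('x, 'e) aut \<Rightarrow> ('z, 'e) aut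
                    \<Rightarrow> ('y, 'e) aut set" where
  "SPR Evs Sig_uc Sig_r G R =
     {S. is_aut Evs S \<and> admissible Sig_uc S G \<and> cc_simulated Sig_r (sync S G) R}"

definition match :: "('x, 'e) aut \<Rightarrow> ('z, 'e) aut \<Rightarrow> ('x \<times> 'z) set \<Rightarrow> 'e \<Rightarrow> ('x \<times> 'z) set \<Rightarrow> bool" where
  "match G R W \<sigma> W' \<longleftrightarrow>
     (\<forall>x z x'. (x, z) \<in> W \<longrightarrow> (x, \<sigma>, x') \<in> trans G \<longrightarrow>
        (\<exists>z'. (z, \<sigma>, z') \<in> trans R \<and> (x', z') \<in> W'))"

definition F_op :: "'e set \<Rightarrow> 'e set \<Rightarrow> ('x, 'e) aut \<Rightarrow> ('z, 'e) aut
                   \<Rightarrow> ('x \<times> 'z) set set \<Rightarrow> ('x \<times> 'z) set set" where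
  "F_op Sig_uc Sig_r G R E =
     {W \<in> E.
        (\<forall>\<sigma>\<in>Sig_uc. \<exists>W'\<in>E. match G R W \<sigma> W') \<and>
        (\<forall>x z \<sigma> z'. (x, z) \<in> W \<longrightarrow> \<sigma> \<in> Sig_r \<longrightarrow> (z, \<sigma>, z') \<in> trans R \<longrightarrow>
           (\<exists>x'\<in>states G. \<exists>W'\<in>E. (x, \<sigma>, x') \<in> trans G \<and> (x', z') \<in> W' \<and> match G R W \<sigma> W'))}"

text \<open>Since F_op E \<subseteq> E, intersecting with the lattice carrier gives exactly
  the union of all post-fixpoints E \<subseteq> Pow (X \<times> Z).\<close>
definition E_up :: "'e set \<Rightarrow> 'e set \<Rightarrow> ('x, 'e) aut \<Rightarrow> ('z, 'e) aut \<Rightarrow> ('x \<times> 'z) set set" where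
  "E_up Sig_uc Sig_r G R =
     gfp (\<lambda>E. F_op Sig_uc Sig_r G R E \<inter> Pow (states G \<times> states R))"

definition E_star :: "('x \<times> 'z) set set \<Rightarrow> ('x \<times> 'z) set set" where
  "E_star E = (\<Union>W\<in>E. Pow W)"

definition Succ :: "('x, 'e) aut \<Rightarrow> ('z, 'e) aut \<Rightarrow> 'e \<Rightarrow> ('x \<times> 'z) set \<Rightarrow> ('x \<times> 'z) set" where
  "Succ G R \<sigma> W = (\<Union>(x, z)\<in>W. {x'. (x, \<sigma>, x') \<in> trans G} \<times> {z'. (z, \<sigma>, z') \<in> trans R})"

definition A_of :: "'e set \<Rightarrow> ('x, 'e) aut \<Rightarrow> ('z, 'e) aut \<Rightarrow> ('x \<times> 'z) set set
                    \<Rightarrow> (('x \<times> 'z) set, 'e) aut" where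
  "A_of Evs G R E = \<lparr> states = E_star E,
      trans = {(W, \<sigma>, W') | W \<sigma> W'. W \<in> E_star E \<and> W' \<in> E_star E \<and> \<sigma> \<in> Evs \<and>
                 (\<exists>x z x' z'. (x, z) \<in> W \<and> (x', z') \<in> W' \<and>
                     (x, \<sigma>, x') \<in> trans G \<and> (z, \<sigma>, z') \<in> trans R) \<and>
                 match G R W \<sigma> W' \<and> W' \<subseteq> Succ G R \<sigma> W},
      init = {W0 \<in> E_star E. (\<forall>x0\<in>init G. \<exists>z0\<in>init R. (x0, z0) \<in> W0) \<and>
                 W0 \<subseteq> init G \<times> init R} \<rparr>"

end

theory Submission
  imports Defs
begin

text \<open>
  Two facts drive the proof. First, for a post-fixpoint E of F, the automaton A(E) is itself a
  valid supervisor: every reachable state (W, x) of the closed loop has some (x, z) in W, the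
  relation pairing (W, x) with such z is a cc-simulation into R, and uncontrollable moves of the
  plant are never blocked because the sets of E meet clause (1) of F (subsets of members of E
  inherit both clauses of F, as match is antitone in its first argument). Second, any valid supervisor S
  with cc-simulation \<Phi> yields the family W_y (supervised_pairs S G \<Phi> y) of pairs (x, z)
  with (y, x) reachable in the closed loop and ((y, x), z) in \<Phi>; this family is a post-fixpoint of F, hence lies in the greatest
  fixpoint, and tracking W_y along the runs of S || G simulates S || G by A(E) || G.
  Nonemptiness of SPR is only needed to make the initial-state set of A(E) nonempty.
\<close>

lemma mono_F_op_restricted:
  "mono (\<lambda>E. F_op Sig_uc Sig_r G R E \<inter> Pow (states G \<times> states R))"
  unfolding mono_def F_op_def by blast

lemma E_up_post_fixpoint:
  "E_up Sig_uc Sig_r G R \<subseteq> F_op Sig_uc Sig_r G R (E_up Sig_uc Sig_r G R)"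
  "E_up Sig_uc Sig_r G R \<subseteq> Pow (states G \<times> states R)"
  using gfp_unfold[OF mono_F_op_restricted, of Sig_uc Sig_r G R]
  unfolding E_up_def by blast+

lemma E_up_coinduct:
  assumes "E \<subseteq> F_op Sig_uc Sig_r G R E" and "E \<subseteq> Pow (states G \<times> states R)"
  shows "E \<subseteq> E_up Sig_uc Sig_r G R"
  unfolding E_up_def by (rule gfp_upperbound) (use assms in blast)

lemma sync_simps [simp]:
  "states (sync S G) = states S \<times> states G"
  "init (sync S G) = init S \<times> init G"
  "((y, x), \<sigma>, (y', x')) \<in> trans (sync S G) \<longleftrightarrow> (y, \<sigma>, y') \<in> trans S \<and> (x, \<sigma>, x') \<in> trans G"
  by (simp_all add: sync_def)

lemma sync_transE:
  assumes "(q, \<sigma>, q') \<in> trans (sync S G)"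
  obtains y x y' x' where "q = (y, x)" "q' = (y', x')"
    "(y, \<sigma>, y') \<in> trans S" "(x, \<sigma>, x') \<in> trans G"
  using assms by (auto simp: sync_def)

lemma is_aut_sync: "is_aut Evs S \<Longrightarrow> is_aut Evs G \<Longrightarrow> is_aut Evs (sync S G)"
  by (auto simp: is_aut_def sync_def)

lemma reachable_in_states:
  assumes "is_aut Evs A" and "reachable A q"
  shows "q \<in> states A"
  using assms(2) by induction (use assms(1) in \<open>auto simp: is_aut_def\<close>)

lemma simulated_init_nonempty: "simulated A B \<Longrightarrow> init A \<noteq> {} \<Longrightarrow> init B \<noteq> {}"
  by (fastforce simp: simulated_def is_sim_def)

lemma match_antimono: "W \<subseteq> Wt \<Longrightarrow> match G R Wt \<sigma> W' \<Longrightarrow> match G R W \<sigma> W'"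
  unfolding match_def by blast

lemma match_Int_Succ: "match G R W \<sigma> W' \<Longrightarrow> match G R W \<sigma> (W' \<inter> Succ G R \<sigma> W)"
  unfolding match_def Succ_def by blast

lemma E_star_iff: "W \<in> E_star E \<longleftrightarrow> (\<exists>Wt\<in>E. W \<subseteq> Wt)"
  unfolding E_star_def by blast

lemma F_opI:
  assumes "W \<in> E"
    and "\<And>\<sigma>. \<sigma> \<in> Sig_uc \<Longrightarrow> \<exists>W'\<in>E. match G R W \<sigma> W'"
    and "\<And>x z \<sigma> z'. (x, z) \<in> W \<Longrightarrow> \<sigma> \<in> Sig_r \<Longrightarrow> (z, \<sigma>, z') \<in> trans R \<Longrightarrow>
      \<exists>x'\<in>states G. \<exists>W'\<in>E. (x, \<sigma>, x') \<in> trans G \<and> (x', z') \<in> W' \<and> match G R W \<sigma> W'"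
  shows "W \<in> F_op Sig_uc Sig_r G R E"
  using assms unfolding F_op_def by simp

lemma F_op_uncontrollableD:
  "W \<in> F_op Sig_uc Sig_r G R E \<Longrightarrow> \<sigma> \<in> Sig_uc \<Longrightarrow> \<exists>W'\<in>E. match G R W \<sigma> W'"
  unfolding F_op_def by blast

lemma F_op_requiredD:
  "W \<in> F_op Sig_uc Sig_r G R E \<Longrightarrow> (x, z) \<in> W \<Longrightarrow> \<sigma> \<in> Sig_r \<Longrightarrow> (z, \<sigma>, z') \<in> trans R \<Longrightarrow>
    \<exists>x'\<in>states G. \<exists>W'\<in>E. (x, \<sigma>, x') \<in> trans G \<and> (x', z') \<in> W' \<and> match G R W \<sigma> W'"
  unfolding F_op_def by blast

lemma E_star_F_op_post_fixpoint:
  assumes "E \<subseteq> F_op Sig_uc Sig_r G R E"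
  shows "E_star E \<subseteq> F_op Sig_uc Sig_r G R (E_star E)"
proof
  fix W assume W: "W \<in> E_star E"
  then obtain Wt where Wt: "Wt \<in> F_op Sig_uc Sig_r G R E" and "W \<subseteq> Wt"
    using assms by (auto simp: E_star_iff)
  have in_E_star: "V \<in> E_star E" if "V \<in> E" for V
    using that by (auto simp: E_star_iff)
  show "W \<in> F_op Sig_uc Sig_r G R (E_star E)"
  proof (rule F_opI[OF W])
    fix \<sigma> assume "\<sigma> \<in> Sig_uc"
    then obtain W' where "W' \<in> E" and "match G R Wt \<sigma> W'"
      using F_op_uncontrollableD[OF Wt] by blast
    then show "\<exists>W'\<in>E_star E. match G R W \<sigma> W'"
      using in_E_star match_antimono[OF \<open>W \<subseteq> Wt\<close>] by meson
  next
    fix x z \<sigma> z' assume "(x, z) \<in> W" "\<sigma> \<in> Sig_r" "(z, \<sigma>, z') \<in> trans R"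
    then obtain x' W' where "x' \<in> states G" "W' \<in> E" "(x, \<sigma>, x') \<in> trans G" "(x', z') \<in> W'"
        and "match G R Wt \<sigma> W'"
      using F_op_requiredD[OF Wt] \<open>W \<subseteq> Wt\<close> by blast
    then show "\<exists>x'\<in>states G. \<exists>W'\<in>E_star E.
        (x, \<sigma>, x') \<in> trans G \<and> (x', z') \<in> W' \<and> match G R W \<sigma> W'"
      using in_E_star match_antimono[OF \<open>W \<subseteq> Wt\<close>] by meson
  qed
qed

lemma A_of_transD:
  assumes "(W, \<sigma>, W') \<in> trans (A_of Evs G R E)"
  shows "W' \<in> E_star E" and "match G R W \<sigma> W'"
  using assms by (simp_all add: A_of_def)

lemma A_of_trans_Int_Succ:
  assumes "W \<in> E_star E" and "W' \<in> E_star E" and "\<sigma> \<in> Evs" and "match G R W \<sigma> W'"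
    and "(x, z) \<in> W" and "(x, \<sigma>, x') \<in> trans G" and "(z, \<sigma>, z') \<in> trans R" and "(x', z') \<in> W'"
  shows "(W, \<sigma>, W' \<inter> Succ G R \<sigma> W) \<in> trans (A_of Evs G R E)"
    and "(x', z') \<in> W' \<inter> Succ G R \<sigma> W"
proof -
  show xz': "(x', z') \<in> W' \<inter> Succ G R \<sigma> W"
    using assms(5-8) unfolding Succ_def by blast
  have "W' \<inter> Succ G R \<sigma> W \<in> E_star E"
    using assms(2) by (auto simp: E_star_iff)
  then show "(W, \<sigma>, W' \<inter> Succ G R \<sigma> W) \<in> trans (A_of Evs G R E)"
    using assms(1,3,5-7) xz' match_Int_Succ[OF assms(4)] unfolding A_of_def by auto
qed

lemma reachable_sync_A_of:
  assumes "reachable (sync (A_of Evs G R E) G) (W, x)"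
  shows "W \<in> E_star E" and "\<exists>z. (x, z) \<in> W"
proof -
  have "W \<in> E_star E \<and> (\<exists>z. (x, z) \<in> W)"
    using assms
  proof (induction "(W, x)" arbitrary: W x rule: reachable.induct)
    case reach_init
    then show ?case by (auto simp: A_of_def)
  next
    case (reach_step q \<sigma>)
    obtain V v where q: "q = (V, v)" and VW: "(V, \<sigma>, W) \<in> trans (A_of Evs G R E)"
      and vx: "(v, \<sigma>, x) \<in> trans G"
      using reach_step.hyps(3) by (rule sync_transE) simp
    obtain z where "(v, z) \<in> V"
      using reach_step.hyps(2)[OF q] by blast
    then obtain z' where "(x, z') \<in> W"
      using A_of_transD(2)[OF VW] vx unfolding match_def by blast
    then show ?case
      using A_of_transD(1)[OF VW] by blast
  qed
  then show "W \<in> E_star E" and "\<exists>z. (x, z) \<in> W" by blast+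
qed

lemma admissible_A_of:
  assumes post: "E \<subseteq> F_op Sig_uc Sig_r G R E" and "Sig_uc \<subseteq> Evs"
  shows "admissible Sig_uc (A_of Evs G R E) G"
  unfolding admissible_def
proof (intro allI impI ballI)
  fix W x \<sigma>
  assume reach: "reachable (sync (A_of Evs G R E) G) (W, x)"
    and "\<sigma> \<in> Sig_uc" and "enabled G x \<sigma>"
  then obtain x' where x': "(x, \<sigma>, x') \<in> trans G"
    unfolding enabled_def by blast
  obtain z where xz: "(x, z) \<in> W"
    using reachable_sync_A_of(2)[OF reach] by blast
  have W: "W \<in> E_star E"
    using reachable_sync_A_of(1)[OF reach] .
  then have "W \<in> F_op Sig_uc Sig_r G R (E_star E)"
    using E_star_F_op_post_fixpoint[OF post] ..
  then obtain W' where W': "W' \<in> E_star E" and match: "match G R W \<sigma> W'"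
    using F_op_uncontrollableD \<open>\<sigma> \<in> Sig_uc\<close> by meson
  then obtain z' where zz': "(z, \<sigma>, z') \<in> trans R" and xz': "(x', z') \<in> W'"
    using xz x' unfolding match_def by blast
  have "\<sigma> \<in> Evs"
    using \<open>\<sigma> \<in> Sig_uc\<close> assms(2) by blast
  then have "(W, \<sigma>, W' \<inter> Succ G R \<sigma> W) \<in> trans (A_of Evs G R E)"
    by (rule A_of_trans_Int_Succ(1)[OF W W' _ match xz x' zz' xz'])
  with x' have "((W, x), \<sigma>, (W' \<inter> Succ G R \<sigma> W, x')) \<in> trans (sync (A_of Evs G R E) G)"
    by simp
  then show "enabled (sync (A_of Evs G R E) G) (W, x) \<sigma>"
    unfolding enabled_def by blast
qed

lemma cc_sim_A_of:
  assumes post: "E \<subseteq> F_op Sig_uc Sig_r G R E"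
    and E_sub: "E \<subseteq> Pow (states G \<times> states R)" and "Sig_r \<subseteq> Evs"
  shows "is_cc_sim Sig_r (sync (A_of Evs G R E) G) R {((W, x), z). W \<in> E_star E \<and> (x, z) \<in> W}"
    (is "is_cc_sim _ (sync ?A G) R ?\<Phi>")
  unfolding is_cc_sim_def is_sim_def
proof (intro conjI ballI allI impI)
  show "?\<Phi> \<subseteq> states (sync ?A G) \<times> states R"
    using E_sub by (fastforce simp: A_of_def E_star_iff)
  show "\<exists>p0\<in>init R. (q0, p0) \<in> ?\<Phi>" if "q0 \<in> init (sync ?A G)" for q0
    using that by (auto simp: A_of_def)
  show "\<exists>p'. (p, \<sigma>, p') \<in> trans R \<and> (q', p') \<in> ?\<Phi>"
    if "(q, p) \<in> ?\<Phi>" and "(q, \<sigma>, q') \<in> trans (sync ?A G)" for q p \<sigma> q'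
  proof -
    from that(2) obtain W x W' x' where "q = (W, x)" "q' = (W', x')"
      "(W, \<sigma>, W') \<in> trans ?A" "(x, \<sigma>, x') \<in> trans G"
      by (rule sync_transE)
    with that(1) show ?thesis
      using A_of_transD[of W \<sigma> W'] unfolding match_def by auto
  qed
  show "\<exists>q'. (q, \<sigma>, q') \<in> trans (sync ?A G) \<and> (q', p') \<in> ?\<Phi>"
    if qp: "(q, p) \<in> ?\<Phi>" and "\<sigma> \<in> Sig_r" and pp': "(p, \<sigma>, p') \<in> trans R" for q p \<sigma> p'
  proof -
    obtain W x where q: "q = (W, x)" and W: "W \<in> E_star E" and xp: "(x, p) \<in> W"
      using qp by auto
    have "W \<in> F_op Sig_uc Sig_r G R (E_star E)"
      using E_star_F_op_post_fixpoint[OF post] W ..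
    then obtain x' W' where W': "W' \<in> E_star E" and xx': "(x, \<sigma>, x') \<in> trans G"
      and "(x', p') \<in> W'" and "match G R W \<sigma> W'"
      using F_op_requiredD[OF _ xp \<open>\<sigma> \<in> Sig_r\<close> pp'] by blast
    then have "(W, \<sigma>, W' \<inter> Succ G R \<sigma> W) \<in> trans ?A"
      and "(x', p') \<in> W' \<inter> Succ G R \<sigma> W"
      using A_of_trans_Int_Succ[OF W W' _ _ xp xx' pp'] \<open>\<sigma> \<in> Sig_r\<close> assms(3) by blast+
    moreover have "W' \<inter> Succ G R \<sigma> W \<in> E_star E"
      using W' by (auto simp: E_star_iff)
    ultimately show ?thesis
      using q xx' by auto
  qed
qed

lemma A_of_in_SPR:
  assumes "E \<subseteq> F_op Sig_uc Sig_r G R E" and "E \<subseteq> Pow (states G \<times> states R)"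
    and "Sig_uc \<subseteq> Evs" and "Sig_r \<subseteq> Evs" and "init (A_of Evs G R E) \<noteq> {}"
  shows "A_of Evs G R E \<in> SPR Evs Sig_uc Sig_r G R"
proof -
  have "is_aut Evs (A_of Evs G R E)"
    using assms(5) unfolding is_aut_def by (auto simp: A_of_def)
  then show ?thesis
    using admissible_A_of[OF assms(1,3)] cc_sim_A_of[OF assms(1,2,4)]
    unfolding SPR_def cc_simulated_def by blast
qed

definition supervised_pairs ::
    "('y, 'e) aut \<Rightarrow> ('x, 'e) aut \<Rightarrow> (('y \<times> 'x) \<times> 'z) set \<Rightarrow> 'y \<Rightarrow> ('x \<times> 'z) set" where
  "supervised_pairs S G \<Phi> y = {(x, z). reachable (sync S G) (y, x) \<and> ((y, x), z) \<in> \<Phi>}"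

lemma match_supervised_pairs:
  assumes sim: "is_sim (sync S G) R \<Phi>" and "(y, \<sigma>, y') \<in> trans S"
  shows "match G R (supervised_pairs S G \<Phi> y) \<sigma> (supervised_pairs S G \<Phi> y')"
  unfolding match_def
proof (intro allI impI)
  fix x z x'
  assume "(x, z) \<in> supervised_pairs S G \<Phi> y" and "(x, \<sigma>, x') \<in> trans G"
  then have reach: "reachable (sync S G) (y, x)" and "((y, x), z) \<in> \<Phi>"
    and step: "((y, x), \<sigma>, (y', x')) \<in> trans (sync S G)"
    using \<open>(y, \<sigma>, y') \<in> trans S\<close> by (auto simp: supervised_pairs_def)
  then obtain z' where "(z, \<sigma>, z') \<in> trans R" "((y', x'), z') \<in> \<Phi>"
    using sim unfolding is_sim_def by blast
  moreover have "reachable (sync S G) (y', x')"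
    using reach step by (rule reach_step)
  ultimately show "\<exists>z'. (z, \<sigma>, z') \<in> trans R \<and> (x', z') \<in> supervised_pairs S G \<Phi> y'"
    by (auto simp: supervised_pairs_def)
qed

lemma supervised_pairs_post_fixpoint:
  assumes "is_aut Evs G" and adm: "admissible Sig_uc S G" and cc: "is_cc_sim Sig_r (sync S G) R \<Phi>"
  shows "range (supervised_pairs S G \<Phi>) \<subseteq> F_op Sig_uc Sig_r G R (range (supervised_pairs S G \<Phi>))"
proof
  let ?W = "supervised_pairs S G \<Phi>"
  have sim: "is_sim (sync S G) R \<Phi>"
    using cc unfolding is_cc_sim_def by blast
  fix W assume "W \<in> range ?W"
  then obtain y where W: "W = ?W y" by blast
  show "W \<in> F_op Sig_uc Sig_r G R (range ?W)"
    unfolding W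
  proof (rule F_opI)
    show "?W y \<in> range ?W" by blast
  next
    fix \<sigma> assume "\<sigma> \<in> Sig_uc"
    show "\<exists>W'\<in>range ?W. match G R (?W y) \<sigma> W'"
    proof (cases "\<exists>x z x'. (x, z) \<in> ?W y \<and> (x, \<sigma>, x') \<in> trans G")
      case True
      then obtain x x' where "reachable (sync S G) (y, x)" "(x, \<sigma>, x') \<in> trans G"
        by (auto simp: supervised_pairs_def)
      then obtain q' where "((y, x), \<sigma>, q') \<in> trans (sync S G)"
        using adm \<open>\<sigma> \<in> Sig_uc\<close> unfolding admissible_def enabled_def by blast
      then obtain y' where "(y, \<sigma>, y') \<in> trans S"
        by (auto elim: sync_transE)
      then show ?thesis
        using match_supervised_pairs[OF sim] by blast
    next
      case False
      then have "match G R (?W y) \<sigma> (?W y)"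
        unfolding match_def by blast
      then show ?thesis by blast
    qed
  next
    fix x z \<sigma> z' assume xz: "(x, z) \<in> ?W y" and "\<sigma> \<in> Sig_r" and "(z, \<sigma>, z') \<in> trans R"
    have reach: "reachable (sync S G) (y, x)" and "((y, x), z) \<in> \<Phi>"
      using xz by (auto simp: supervised_pairs_def)
    then obtain y' x' where step: "((y, x), \<sigma>, (y', x')) \<in> trans (sync S G)"
        and "((y', x'), z') \<in> \<Phi>"
      using cc \<open>\<sigma> \<in> Sig_r\<close> \<open>(z, \<sigma>, z') \<in> trans R\<close> unfolding is_cc_sim_def by fast
    moreover have "reachable (sync S G) (y', x')"
      using reach step by (rule reach_step)
    ultimately have "(x', z') \<in> ?W y'"
      by (simp add: supervised_pairs_def)
    moreover have "x' \<in> states G"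
      using step \<open>is_aut Evs G\<close> by (auto simp: is_aut_def)
    moreover have "(y, \<sigma>, y') \<in> trans S" and "(x, \<sigma>, x') \<in> trans G"
      using step by simp_all
    ultimately show "\<exists>x'\<in>states G. \<exists>W'\<in>range ?W.
        (x, \<sigma>, x') \<in> trans G \<and> (x', z') \<in> W' \<and> match G R (?W y) \<sigma> W'"
      using match_supervised_pairs[OF sim] by blast
  qed
qed

lemma supervised_pairs_in_E_up:
  assumes "is_aut Evs G" and "admissible Sig_uc S G" and cc: "is_cc_sim Sig_r (sync S G) R \<Phi>"
  shows "supervised_pairs S G \<Phi> y \<in> E_up Sig_uc Sig_r G R"
proof -
  have "\<Phi> \<subseteq> (states S \<times> states G) \<times> states R"
    using cc unfolding is_cc_sim_def is_sim_def by simp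
  then have "range (supervised_pairs S G \<Phi>) \<subseteq> Pow (states G \<times> states R)"
    unfolding supervised_pairs_def by blast
  then have "range (supervised_pairs S G \<Phi>) \<subseteq> E_up Sig_uc Sig_r G R"
    by (rule E_up_coinduct[OF supervised_pairs_post_fixpoint[OF assms]])
  then show ?thesis
    by blast
qed

lemma sync_simulated_by_A_of:
  assumes "is_aut Evs S" and G: "is_aut Evs G" and sim: "is_sim (sync S G) R \<Phi>"
    and in_E: "range (supervised_pairs S G \<Phi>) \<subseteq> E"
  shows "simulated (sync S G) (sync (A_of Evs G R E) G)"
proof -
  let ?A = "A_of Evs G R E" and ?W = "supervised_pairs S G \<Phi>"
  \<comment> \<open>The A(E)-component is only kept inside W_y, not equal to it: condition (iii) of A(E)
    forces intersecting with Succ at every step.\<close>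
  define \<Psi> where "\<Psi> = {((y, x), (W, x)) | y x W.
      reachable (sync S G) (y, x) \<and> W \<subseteq> ?W y \<and> (\<exists>z. (x, z) \<in> W)}"
  have W_E_star: "W \<in> E_star E" if "W \<subseteq> ?W y" for W y
    unfolding E_star_iff using that in_E by (meson rangeI subsetD)
  have "is_sim (sync S G) (sync ?A G) \<Psi>"
    unfolding is_sim_def
  proof (intro conjI ballI allI impI)
    show "\<Psi> \<subseteq> states (sync S G) \<times> states (sync ?A G)"
      using reachable_in_states[OF is_aut_sync[OF assms(1,2)]] W_E_star
      by (auto simp: \<Psi>_def A_of_def)
    show "\<exists>p0\<in>init (sync ?A G). (q0, p0) \<in> \<Psi>" if init_q0: "q0 \<in> init (sync S G)" for q0
    proof -
      obtain y0 x0 where q0: "q0 = (y0, x0)" "y0 \<in> init S" "x0 \<in> init G"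
        using init_q0 by auto
      define W0 where "W0 = {(x, z). x \<in> init G \<and> z \<in> init R \<and> ((y0, x), z) \<in> \<Phi>}"
      have "W0 \<subseteq> ?W y0"
        using q0 by (auto simp: W0_def supervised_pairs_def intro: reach_init)
      moreover have "\<forall>x\<in>init G. \<exists>z\<in>init R. (x, z) \<in> W0"
        using sim q0 unfolding is_sim_def W0_def by auto
      ultimately have "W0 \<in> init ?A" and "(q0, (W0, x0)) \<in> \<Psi>"
        using q0 W_E_star by (auto simp: A_of_def W0_def \<Psi>_def intro: reach_init)
      then show ?thesis
        using q0 by auto
    qed
    show "\<exists>p'. (p, \<sigma>, p') \<in> trans (sync ?A G) \<and> (q', p') \<in> \<Psi>"
      if qp: "(q, p) \<in> \<Psi>" and step: "(q, \<sigma>, q') \<in> trans (sync S G)" for q p \<sigma> q'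
    proof -
      obtain y x y' x' W z where eqs: "q = (y, x)" "p = (W, x)" "q' = (y', x')"
        and reach: "reachable (sync S G) (y, x)" and "W \<subseteq> ?W y" and xz: "(x, z) \<in> W"
        and yy': "(y, \<sigma>, y') \<in> trans S" and xx': "(x, \<sigma>, x') \<in> trans G"
        using qp step unfolding \<Psi>_def by (auto elim!: sync_transE)
      have match: "match G R W \<sigma> (?W y')"
        using match_antimono[OF \<open>W \<subseteq> ?W y\<close> match_supervised_pairs[OF sim yy']] .
      then obtain z' where zz': "(z, \<sigma>, z') \<in> trans R" and "(x', z') \<in> ?W y'"
        using xz xx' unfolding match_def by blast
      moreover have "\<sigma> \<in> Evs"
        using xx' G by (auto simp: is_aut_def)
      ultimately have "(W, \<sigma>, ?W y' \<inter> Succ G R \<sigma> W) \<in> trans ?A"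
        and "(x', z') \<in> ?W y' \<inter> Succ G R \<sigma> W"
        using A_of_trans_Int_Succ[OF W_E_star[OF \<open>W \<subseteq> ?W y\<close>] W_E_star[OF order_refl]
            _ match xz xx'] by blast+
      moreover have "reachable (sync S G) (y', x')"
        using reach yy' xx' by (auto intro: reach_step)
      ultimately show ?thesis
        using eqs xx' unfolding \<Psi>_def by auto
    qed
  qed
  then show ?thesis
    unfolding simulated_def by blast
qed

lemma A_of_E_up_maximal:
  assumes "is_aut Evs G" and "S \<in> SPR Evs Sig_uc Sig_r G R"
  shows "simulated (sync S G) (sync (A_of Evs G R (E_up Sig_uc Sig_r G R)) G)"
proof -
  obtain \<Phi> where S: "is_aut Evs S" "admissible Sig_uc S G" and cc: "is_cc_sim Sig_r (sync S G) R \<Phi>"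
    using assms(2) unfolding SPR_def cc_simulated_def by blast
  then have "is_sim (sync S G) R \<Phi>"
    unfolding is_cc_sim_def by blast
  then show ?thesis
    using sync_simulated_by_A_of[OF S(1) assms(1)] supervised_pairs_in_E_up[OF assms(1) S(2) cc]
    by blast
qed

theorem theorem2:
  fixes Evs Sig_uc Sig_r :: "'e set"
    and G :: "('x, 'e) aut" and R :: "('z, 'e) aut"
  assumes "finite Evs" and "Sig_uc \<subseteq> Evs" and "Sig_r \<subseteq> Evs"
    and "is_aut Evs G" and "is_aut Evs R"
    and "SPR Evs Sig_uc Sig_r G R \<noteq> ({} :: ('w, 'e) aut set)"
  shows "A_of Evs G R (E_up Sig_uc Sig_r G R) \<in> SPR Evs Sig_uc Sig_r G R
       \<and> (\<forall>S' :: ('y, 'e) aut. S' \<in> SPR Evs Sig_uc Sig_r G R \<longrightarrow>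
            simulated (sync S' G) (sync (A_of Evs G R (E_up Sig_uc Sig_r G R)) G))"
proof -
  let ?A = "A_of Evs G R (E_up Sig_uc Sig_r G R)"
  obtain S :: "('w, 'e) aut" where S: "S \<in> SPR Evs Sig_uc Sig_r G R"
    using assms(6) by blast
  then have "init (sync S G) \<noteq> {}"
    using is_aut_sync[OF _ assms(4)] unfolding SPR_def is_aut_def by blast
  then have "init (sync ?A G) \<noteq> {}"
    using simulated_init_nonempty A_of_E_up_maximal[OF assms(4) S] by blast
  then have "init ?A \<noteq> {}"
    by simp
  then have "?A \<in> SPR Evs Sig_uc Sig_r G R"
    by (rule A_of_in_SPR[OF E_up_post_fixpoint assms(2,3)])
  then show ?thesis
    using A_of_E_up_maximal[OF assms(4)] by blast
qed

end
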